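(* Fix $C\neq1$ and fix $\epsilon\in(0,1)$, $\omega>0$ such that $\delta_0=\delta(C)-C\epsilon-\omega>0$. Fix $M>\frac1{\delta_0}$ and $\theta<M\delta_0-1$. There is a positive constant $N$ such that \[ \mathbb{P}\Big(\bigcup_{1\le i\le n}\{M\log n+1\le\#\mathcal{E}_i\le\epsilon n\}\Big)\le\frac1{n^\theta} \] for all $n\ge N$.
   Context: Let $C>0$ be a constant and $(\alpha_n)_{n\ge1}$ a sequence of nonnegative reals with $\alpha_n\to0$. For each $n$, consider the complete graph $K_n$ on vertex set $\{1,\dots,n\}$; each edge $e$ of $K_n$ is independently open with probability $p_n(e)$ and closed otherwise, where $\frac{C-\alpha_n}{n}\le p_n(e)\le\frac{C+\alpha_n}{n}$ for every edge $e$. Let $G$ be the resulting random graph of open edges, with probability measure $\mathbb{P}$. For a vertex $i$, $\mathcal{E}_i$ denotes the open component of $G$ containing $i$ (the set of vertices joined to $i$ by a path of open edges, together with $i$ itself), and $\#\mathcal{E}_i$ its number of vertices. $\delta(C)=C-1-\log C$. $\log$ is the natural logarithm. *)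

theory Defs
  imports "HOL-Probability.Probability"
begin

definition Kn_edges :: "nat \<Rightarrow> nat set set" where
  "Kn_edges n = {e. \<exists>i j. i \<in> {1..n} \<and> j \<in> {1..n} \<and> i \<noteq> j \<and> e = {i, j}}"

text \<open>Random graph: each edge e of K_n is independently open (True) with probability p e.
  Outcomes are functions from edges to bool (default False outside the edge set).\<close>
definition random_graph :: "nat \<Rightarrow> (nat set \<Rightarrow> real) \<Rightarrow> (nat set \<Rightarrow> bool) pmf" where
  "random_graph n p = Pi_pmf (Kn_edges n) False (\<lambda>e. bernoulli_pmf (p e))"

definition open_rel :: "nat \<Rightarrow> (nat set \<Rightarrow> bool) \<Rightarrow> (nat \<times> nat) set" where
  "open_rel n G = {(a, b). a \<in> {1..n} \<and> b \<in> {1..n} \<and> a \<noteq> b \<and> G {a, b}}"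

definition open_component :: "nat \<Rightarrow> (nat set \<Rightarrow> bool) \<Rightarrow> nat \<Rightarrow> nat set" where
  "open_component n G i = {j. (i, j) \<in> (open_rel n G)\<^sup>*}"

definition delta :: "real \<Rightarrow> real" where
  "delta C = C - 1 - ln C"

end

theory Submission
  imports Defs
begin

text \<open>If the open component of \<open>i\<close> is a set \<open>S\<close> with \<open>k\<close> vertices, then \<open>S\<close> carries a spanning
  tree whose \<open>k - 1\<close> edges are open, while all \<open>k (n - k)\<close> edges leaving \<open>S\<close> are closed.
  Encoding the tree by a parent map (at most \<open>k ^ (k - 1)\<close> choices) and taking a union bound over
  \<open>k\<close>, \<open>S\<close> and \<open>i \<in> S\<close>, some component has size \<open>k\<close> with probability at most
  \<open>(n choose k) k ^ k q ^ (k - 1) (1 - r) ^ (k (n - k))\<close>, where \<open>q = (C + a) / n\<close>, \<open>r = (C - a) / n\<close>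
  and \<open>a = \<alpha> n\<close>. For \<open>k \<le> \<epsilon> n\<close> this is at most \<open>(n / C) x ^ k\<close> with
  \<open>x = e (C + a) exp (- (C - a) (1 - \<epsilon>))\<close>, and \<open>x \<le> exp (- \<rho>)\<close> for \<open>\<rho> = \<delta>(C) - C \<epsilon> - \<omega> / 2\<close>
  once \<open>a\<close> is small. The geometric tail from \<open>k \<ge> M log n\<close> is then \<open>O(n ^ (1 - \<rho> M))\<close>, and
  \<open>1 - \<rho> M < - \<theta>\<close>.\<close>

section \<open>Spanning trees of components\<close>

lemma finite_Kn_edges: "finite (Kn_edges n)"
proof -
  have "Kn_edges n \<subseteq> (\<lambda>(i, j). {i, j}) ` ({1..n} \<times> {1..n})"
    unfolding Kn_edges_def by auto
  then show ?thesis
    by (rule finite_subset) auto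
qed

definition cut_edges :: "nat \<Rightarrow> nat set \<Rightarrow> nat set set" where
  "cut_edges n S = {e. \<exists>a\<in>S. \<exists>b\<in>{1..n} - S. e = {a, b}}"

definition tree_edges :: "'a set \<Rightarrow> 'a \<Rightarrow> ('a \<Rightarrow> 'a) \<Rightarrow> 'a set set" where
  "tree_edges S i f = (\<lambda>v. {v, f v}) ` (S - {i})"

text \<open>Injectivity of \<open>v \<mapsto> {v, f v}\<close> makes the \<open>card S - 1\<close> tree edges distinct.\<close>
definition parent_maps :: "'a set \<Rightarrow> 'a \<Rightarrow> ('a \<Rightarrow> 'a) set" where
  "parent_maps S i = {f \<in> (S - {i}) \<rightarrow>\<^sub>E S. inj_on (\<lambda>v. {v, f v}) (S - {i}) \<and> (\<forall>v\<in>S - {i}. f v \<noteq> v)}"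

definition tree_cut_event :: "nat \<Rightarrow> nat set \<Rightarrow> nat \<Rightarrow> (nat \<Rightarrow> nat) \<Rightarrow> (nat set \<Rightarrow> bool) set" where
  "tree_cut_event n S i f = Pi (Kn_edges n)
     (\<lambda>e. if e \<in> tree_edges S i f then {True} else if e \<in> cut_edges n S then {False} else UNIV)"

lemma card_cut_edges:
  assumes "S \<subseteq> {1..n}"
  shows "card (cut_edges n S) = card S * (n - card S)"
proof -
  have eq: "cut_edges n S = (\<lambda>(a, b). {a, b}) ` (S \<times> ({1..n} - S))"
    unfolding cut_edges_def by auto
  have inj: "inj_on (\<lambda>(a, b). {a, b}) (S \<times> ({1..n} - S))"
    unfolding inj_on_def by (auto simp: doubleton_eq_iff)
  have "finite S"
    using assms finite_subset by blast
  with assms have "card ({1..n} - S) = n - card S"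
    by (simp add: card_Diff_subset)
  with \<open>finite S\<close> show ?thesis
    unfolding eq card_image[OF inj] by (simp add: card_cartesian_product)
qed

lemma card_tree_edges:
  assumes "f \<in> parent_maps S i" "i \<in> S" "finite S"
  shows "card (tree_edges S i f) = card S - 1"
proof -
  have "inj_on (\<lambda>v. {v, f v}) (S - {i})"
    using assms(1) unfolding parent_maps_def by blast
  with assms(2,3) show ?thesis
    unfolding tree_edges_def by (simp add: card_image)
qed

lemma tree_edges_subset_Kn_edges:
  assumes "f \<in> parent_maps S i" "S \<subseteq> {1..n}"
  shows "tree_edges S i f \<subseteq> Kn_edges n"
proof
  fix e assume "e \<in> tree_edges S i f"
  then obtain v where v: "v \<in> S - {i}" "e = {v, f v}"
    unfolding tree_edges_def by blast
  moreover have "f v \<in> S" "f v \<noteq> v"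
    using assms(1) v(1) unfolding parent_maps_def by auto
  ultimately show "e \<in> Kn_edges n"
    unfolding Kn_edges_def using assms(2) by blast
qed

lemma cut_edges_subset_Kn_edges: "S \<subseteq> {1..n} \<Longrightarrow> cut_edges n S \<subseteq> Kn_edges n"
  unfolding cut_edges_def Kn_edges_def by blast

lemma tree_edges_cut_edges_disjoint:
  assumes "f \<in> parent_maps S i"
  shows "tree_edges S i f \<inter> cut_edges n S = {}"
proof (rule ccontr)
  assume "tree_edges S i f \<inter> cut_edges n S \<noteq> {}"
  then obtain v a b where v: "v \<in> S - {i}" "a \<in> S" "b \<notin> S" "{v, f v} = {a, b}"
    unfolding tree_edges_def cut_edges_def by blast
  moreover have "f v \<in> S"
    using assms v(1) unfolding parent_maps_def by auto
  ultimately show False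
    by (auto simp: doubleton_eq_iff)
qed

lemma prob_tree_cut_event_le:
  assumes S: "S \<subseteq> {1..n}" and i: "i \<in> S" and f: "f \<in> parent_maps S i"
    and p: "\<And>e. e \<in> Kn_edges n \<Longrightarrow> 0 \<le> p e \<and> p e \<le> 1 \<and> r \<le> p e \<and> p e \<le> q" and q: "0 \<le> q"
  shows "measure_pmf.prob (random_graph n p) (tree_cut_event n S i f)
           \<le> q ^ (card S - 1) * (1 - r) ^ (card S * (n - card S))"
proof -
  let ?E = "Kn_edges n" and ?T = "tree_edges S i f" and ?X = "cut_edges n S"
  have TE: "?T \<subseteq> ?E" and XE: "?X \<subseteq> ?E"
    using tree_edges_subset_Kn_edges[OF f S] cut_edges_subset_Kn_edges[OF S] .
  have "measure_pmf.prob (random_graph n p) (tree_cut_event n S i f)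
      = (\<Prod>e\<in>?E. measure_pmf.prob (bernoulli_pmf (p e))
                   (if e \<in> ?T then {True} else if e \<in> ?X then {False} else UNIV))"
    unfolding random_graph_def tree_cut_event_def by (rule measure_Pi_pmf_Pi[OF finite_Kn_edges])
  also have "\<dots> = (\<Prod>e\<in>?E. (if e \<in> ?T then p e else 1) * (if e \<in> ?X then 1 - p e else 1))"
    using tree_edges_cut_edges_disjoint[OF f, of n]
    by (intro prod.cong refl) (auto simp: measure_pmf_single p)
  also have "\<dots> = (\<Prod>e\<in>?T. p e) * (\<Prod>e\<in>?X. 1 - p e)"
    using TE XE by (simp add: prod.distrib prod.inter_restrict[OF finite_Kn_edges, symmetric]
        Int_absorb1)
  also have "\<dots> \<le> q ^ card ?T * (1 - r) ^ card ?X"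
  proof (rule mult_mono)
    show "(\<Prod>e\<in>?T. p e) \<le> q ^ card ?T"
      using TE p by (intro order.trans[OF prod_mono[of ?T p "\<lambda>_. q"]]) auto
    show "(\<Prod>e\<in>?X. 1 - p e) \<le> (1 - r) ^ card ?X"
      using XE p by (intro order.trans[OF prod_mono[of ?X "\<lambda>e. 1 - p e" "\<lambda>_. 1 - r"]]) auto
    show "0 \<le> q ^ card ?T"
      using q by simp
    show "0 \<le> (\<Prod>e\<in>?X. 1 - p e)"
      using XE p by (intro prod_nonneg) auto
  qed
  also have "\<dots> = q ^ (card S - 1) * (1 - r) ^ (card S * (n - card S))"
    using card_tree_edges[OF f i] card_cut_edges[OF S] finite_subset[OF S] by simp
  finally show ?thesis .
qed

text \<open>Breadth-first search: the parent of \<open>v\<close> is a predecessor at smaller \<open>R\<close>-distance from \<open>i\<close>.\<close>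
lemma rtrancl_parent_map:
  assumes S: "S = {j. (i, j) \<in> R\<^sup>*}"
  obtains f where "f \<in> parent_maps S i" "\<And>v. v \<in> S - {i} \<Longrightarrow> (f v, v) \<in> R"
proof -
  define d where "d v = (LEAST m. (i, v) \<in> R ^^ m)" for v
  have d: "(i, v) \<in> R ^^ d v" if "v \<in> S" for v
  proof -
    from that have "\<exists>m. (i, v) \<in> R ^^ m"
      unfolding S using rtrancl_power by blast
    then show ?thesis
      unfolding d_def by (rule LeastI_ex)
  qed
  have parent: "\<exists>u. u \<in> S \<and> (u, v) \<in> R \<and> d u < d v" if v: "v \<in> S - {i}" for v
  proof -
    obtain m where m: "d v = Suc m"
      using d[of v] v by (cases "d v") auto
    then obtain u where u: "(i, u) \<in> R ^^ m" "(u, v) \<in> R"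
      using d[of v] v by (auto elim: relpow_Suc_E)
    have "d u \<le> m"
      unfolding d_def using u(1) by (rule Least_le)
    with u m show ?thesis
      unfolding S by (auto dest: relpow_imp_rtrancl)
  qed
  define f where "f = restrict (\<lambda>v. SOME u. u \<in> S \<and> (u, v) \<in> R \<and> d u < d v) (S - {i})"
  have f: "f v \<in> S" "(f v, v) \<in> R" "d (f v) < d v" if "v \<in> S - {i}" for v
    using someI_ex[OF parent[OF that]] that unfolding f_def by auto
  have "inj_on (\<lambda>v. {v, f v}) (S - {i})"
  proof (rule inj_onI, rule ccontr)
    fix v w assume v: "v \<in> S - {i}" and w: "w \<in> S - {i}" and "{v, f v} = {w, f w}" "v \<noteq> w"
    then have "w = f v" "v = f w"
      by (auto simp: doubleton_eq_iff)
    then have "d w < d v" "d v < d w"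
      using f(3)[OF v] f(3)[OF w] by simp_all
    then show False
      by simp
  qed
  moreover have "f \<in> (S - {i}) \<rightarrow>\<^sub>E S"
    using f(1) unfolding f_def by auto
  moreover have "f v \<noteq> v" if "v \<in> S - {i}" for v
    using f(3)[OF that] by auto
  ultimately have "f \<in> parent_maps S i"
    unfolding parent_maps_def by blast
  then show thesis
    using f(2) by (rule that)
qed

lemma open_component_subset:
  assumes "i \<in> {1..n}"
  shows "open_component n G i \<subseteq> {1..n}"
proof
  fix j assume "j \<in> open_component n G i"
  then have "(i, j) \<in> (open_rel n G)\<^sup>*"
    unfolding open_component_def by simp
  then show "j \<in> {1..n}"
    by (induction rule: rtrancl_induct) (use assms in \<open>auto simp: open_rel_def\<close>)
qed

lemma open_component_in_tree_cut_event:
  assumes i: "i \<in> {1..n}"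
  shows "\<exists>f\<in>parent_maps (open_component n G i) i.
           G \<in> tree_cut_event n (open_component n G i) i f"
proof -
  define S where "S = open_component n G i"
  obtain f where f: "f \<in> parent_maps S i" and open_parent: "\<And>v. v \<in> S - {i} \<Longrightarrow> (f v, v) \<in> open_rel n G"
    using rtrancl_parent_map[of S i "open_rel n G"] unfolding S_def open_component_def by blast
  have tree_open: "G e" if "e \<in> tree_edges S i f" for e
    using that open_parent unfolding tree_edges_def open_rel_def by (auto simp: insert_commute)
  have cut_closed: "\<not> G e" if e: "e \<in> cut_edges n S" for e
  proof
    assume "G e"
    obtain a b where ab: "a \<in> S" "b \<in> {1..n} - S" "e = {a, b}"
      using e unfolding cut_edges_def by blast
    with \<open>G e\<close> open_component_subset[OF i, of G] have "(a, b) \<in> open_rel n G"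
      unfolding open_rel_def S_def by auto
    with ab show False
      unfolding S_def open_component_def by (auto intro: rtrancl_into_rtrancl)
  qed
  have "G \<in> tree_cut_event n S i f"
    unfolding tree_cut_event_def using tree_open cut_closed by auto
  with f show ?thesis
    unfolding S_def by blast
qed

lemma card_parent_maps:
  assumes "finite S" "i \<in> S"
  shows "card (parent_maps S i) \<le> card S ^ (card S - 1)"
proof -
  have "card (parent_maps S i) \<le> card ((S - {i}) \<rightarrow>\<^sub>E S)"
    unfolding parent_maps_def by (rule card_mono) (auto intro: finite_PiE assms)
  also have "\<dots> = card S ^ (card S - 1)"
    using assms by (simp add: card_PiE)
  finally show ?thesis .
qed

lemma finite_parent_maps: "finite S \<Longrightarrow> finite (parent_maps S i)"
  unfolding parent_maps_def by (rule finite_subset[of _ "(S - {i}) \<rightarrow>\<^sub>E S"]) (auto intro: finite_PiE)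

section \<open>The union bound\<close>

lemma prob_finite_Union_le:
  "finite I \<Longrightarrow> measure_pmf.prob P (\<Union>i\<in>I. A i) \<le> (\<Sum>i\<in>I. measure_pmf.prob P (A i))"
  by (intro measure_pmf.finite_measure_subadditive_finite) auto

lemma component_size_event_subset:
  "{G. \<exists>i\<in>{1..n}. card (open_component n G i) \<in> K}
     \<subseteq> (\<Union>k\<in>K \<inter> {..n}. \<Union>S\<in>{S. S \<subseteq> {1..n} \<and> card S = k}. \<Union>i\<in>S.
           \<Union>f\<in>parent_maps S i. tree_cut_event n S i f)"
proof
  fix G assume "G \<in> {G. \<exists>i\<in>{1..n}. card (open_component n G i) \<in> K}"
  then obtain i where i: "i \<in> {1..n}" and K: "card (open_component n G i) \<in> K"
    by blast
  define S where "S = open_component n G i"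
  have sub: "S \<subseteq> {1..n}"
    unfolding S_def by (rule open_component_subset[OF i])
  then have "card S \<in> K \<inter> {..n}"
    using K card_mono[OF _ sub] unfolding S_def by simp
  moreover have "i \<in> S"
    unfolding S_def open_component_def by simp
  moreover obtain f where "f \<in> parent_maps S i" "G \<in> tree_cut_event n S i f"
    using open_component_in_tree_cut_event[OF i] unfolding S_def by blast
  ultimately show "G \<in> (\<Union>k\<in>K \<inter> {..n}. \<Union>S\<in>{S. S \<subseteq> {1..n} \<and> card S = k}. \<Union>i\<in>S.
           \<Union>f\<in>parent_maps S i. tree_cut_event n S i f)"
    using sub by blast
qed

lemma prob_spanning_tree_cut_le:
  assumes S: "S \<subseteq> {1..n}" "card S = k"
    and p: "\<And>e. e \<in> Kn_edges n \<Longrightarrow> 0 \<le> p e \<and> p e \<le> 1 \<and> r \<le> p e \<and> p e \<le> q"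
    and q: "0 \<le> q" and r: "r \<le> 1"
  shows "measure_pmf.prob (random_graph n p) (\<Union>i\<in>S. \<Union>f\<in>parent_maps S i. tree_cut_event n S i f)
           \<le> real k ^ k * (q ^ (k - 1) * (1 - r) ^ (k * (n - k)))"
proof -
  let ?P = "random_graph n p" and ?T = "q ^ (k - 1) * (1 - r) ^ (k * (n - k))"
  have fin: "finite S"
    using S(1) finite_subset by blast
  have "measure_pmf.prob ?P (\<Union>i\<in>S. \<Union>f\<in>parent_maps S i. tree_cut_event n S i f)
      \<le> (\<Sum>i\<in>S. \<Sum>f\<in>parent_maps S i. measure_pmf.prob ?P (tree_cut_event n S i f))"
    using fin finite_parent_maps[OF fin]
    by (intro order.trans[OF prob_finite_Union_le] sum_mono prob_finite_Union_le) auto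
  also have "\<dots> \<le> (\<Sum>i\<in>S. real (card (parent_maps S i)) * ?T)"
    using prob_tree_cut_event_le[OF S(1) _ _ p q] S(2) by (intro sum_mono) (simp add: sum_bounded_above)
  also have "\<dots> \<le> (\<Sum>i\<in>S. real k ^ (k - 1) * ?T)"
    using card_parent_maps[OF fin] S(2) q r
    by (intro sum_mono mult_right_mono) (auto simp flip: of_nat_power)
  also have "\<dots> = real k * real k ^ (k - 1) * ?T"
    using S(2) by simp
  also have "\<dots> \<le> real k ^ k * ?T"
    using q r by (cases k) auto
  finally show ?thesis .
qed

lemma prob_component_size_le:
  assumes p: "\<And>e. e \<in> Kn_edges n \<Longrightarrow> 0 \<le> p e \<and> p e \<le> 1 \<and> r \<le> p e \<and> p e \<le> q"
    and q: "0 \<le> q" and r: "r \<le> 1"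
  shows "measure_pmf.prob (random_graph n p) {G. \<exists>i\<in>{1..n}. card (open_component n G i) \<in> K}
    \<le> (\<Sum>k\<in>K \<inter> {..n}. real (n choose k) * real k ^ k * (q ^ (k - 1) * (1 - r) ^ (k * (n - k))))"
proof -
  let ?P = "random_graph n p" and ?Sub = "\<lambda>k. {S. S \<subseteq> {1..n} \<and> card S = k}"
  have fin: "finite (?Sub k)" for k
    by (rule finite_subset[of _ "Pow {1..n}"]) auto
  have "measure_pmf.prob ?P {G. \<exists>i\<in>{1..n}. card (open_component n G i) \<in> K}
      \<le> (\<Sum>k\<in>K \<inter> {..n}. \<Sum>S\<in>?Sub k.
           measure_pmf.prob ?P (\<Union>i\<in>S. \<Union>f\<in>parent_maps S i. tree_cut_event n S i f))"
    using fin by (intro order.trans[OF measure_pmf.finite_measure_mono[OF component_size_event_subset]]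
        order.trans[OF prob_finite_Union_le] sum_mono prob_finite_Union_le) auto
  also have "\<dots> \<le> (\<Sum>k\<in>K \<inter> {..n}. \<Sum>S\<in>?Sub k. real k ^ k * (q ^ (k - 1) * (1 - r) ^ (k * (n - k))))"
    using prob_spanning_tree_cut_le[OF _ _ p q r] by (intro sum_mono) auto
  also have "\<dots> = (\<Sum>k\<in>K \<inter> {..n}. real (n choose k) * real k ^ k * (q ^ (k - 1) * (1 - r) ^ (k * (n - k))))"
    using n_subsets[of "{1..n}"] by (simp add: mult.assoc)
  finally show ?thesis .
qed

section \<open>Estimating the union bound\<close>

lemma power_self_le_fact_exp: "real k ^ k \<le> fact k * exp (real k)"
proof -
  have sums: "(\<lambda>j. real k ^ j / fact j) sums exp (real k)"
    using exp_converges[of "real k"] by (simp add: divide_inverse mult.commute scaleR_conv_of_real)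
  have "real k ^ k / fact k = (\<Sum>j\<in>{k}. real k ^ j / fact j)"
    by simp
  also have "\<dots> \<le> (\<Sum>j. real k ^ j / fact j)"
    by (rule sum_le_suminf[OF sums_summable[OF sums]]) auto
  also have "\<dots> = exp (real k)"
    using sums by (simp add: sums_iff)
  finally show ?thesis
    by (simp add: field_simps)
qed

lemma binomial_mult_power_self_le: "real (n choose k) * real k ^ k \<le> real n ^ k * exp (real k)"
proof -
  have "real (n choose k) * fact k \<le> real n ^ k"
    using binomial_fact_pow[of n k] by (metis of_nat_fact of_nat_le_iff of_nat_mult of_nat_power)
  then have "real (n choose k) * (fact k * exp (real k)) \<le> real n ^ k * exp (real k)"
    by (simp add: mult.assoc[symmetric])
  moreover have "real (n choose k) * real k ^ k \<le> real (n choose k) * (fact k * exp (real k))"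
    by (intro mult_left_mono power_self_le_fact_exp) simp
  ultimately show ?thesis
    by linarith
qed

lemma one_minus_power_le_exp:
  fixes r :: real
  assumes "0 \<le> r" "r \<le> 1" "c \<le> r * real m"
  shows "(1 - r) ^ m \<le> exp (- c)"
proof -
  have "(1 - r) ^ m \<le> exp (- r) ^ m"
    using assms by (intro power_mono) (auto simp: exp_ge_add_one_self[of "- r", simplified])
  also have "\<dots> = exp (- (r * real m))"
    by (simp add: exp_of_nat_mult[symmetric] mult.commute)
  also have "\<dots> \<le> exp (- c)"
    using assms by simp
  finally show ?thesis .
qed

lemma power_closed_cut_le:
  fixes c \<epsilon> :: real
  assumes n: "0 < real n" and c: "0 \<le> c" "c \<le> real n" and k: "real k \<le> \<epsilon> * real n" and \<epsilon>: "\<epsilon> < 1"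
  shows "(1 - c / real n) ^ (k * (n - k)) \<le> exp (- c * (1 - \<epsilon>)) ^ k"
proof -
  have "\<epsilon> * real n \<le> 1 * real n"
    using \<epsilon> n by (intro mult_right_mono) auto
  with k have "(1 - \<epsilon>) * real n \<le> real (n - k)"
    by (simp add: of_nat_diff algebra_simps)
  then have "c / real n * ((1 - \<epsilon>) * real n) \<le> c / real n * real (n - k)"
    using c by (intro mult_left_mono) auto
  then have "c * (1 - \<epsilon>) * real k \<le> c / real n * real (n - k) * real k"
    using n by (intro mult_right_mono) auto
  then have "c * (1 - \<epsilon>) * real k \<le> c / real n * real (k * (n - k))"
    by (simp only: of_nat_mult mult_ac)
  then have "(1 - c / real n) ^ (k * (n - k)) \<le> exp (- (c * (1 - \<epsilon>) * real k))"
    using c n by (intro one_minus_power_le_exp) auto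
  also have "\<dots> = exp (- c * (1 - \<epsilon>)) ^ k"
    by (simp add: exp_of_nat_mult[symmetric] algebra_simps)
  finally show ?thesis .
qed

lemma component_size_term_le:
  fixes C a \<epsilon> :: real
  assumes k: "1 \<le> k" "real k \<le> \<epsilon> * real n" and \<epsilon>: "\<epsilon> < 1"
    and C: "0 < C" and a: "0 \<le> a" "a \<le> C" and n: "C \<le> real n"
  shows "real (n choose k) * real k ^ k * (((C + a) / real n) ^ (k - 1) * (1 - (C - a) / real n) ^ (k * (n - k)))
     \<le> (real n / C) * (exp 1 * (C + a) * exp (- (C - a) * (1 - \<epsilon>))) ^ k"
proof -
  define q where "q = (C + a) / real n"
  define y where "y = exp (- (C - a) * (1 - \<epsilon>))"
  have npos: "real n > 0"
    using C n by linarith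
  have q: "0 \<le> q"
    unfolding q_def using a C npos by auto
  have cut: "(1 - (C - a) / real n) ^ (k * (n - k)) \<le> y ^ k"
    unfolding y_def using a n k(2) \<epsilon> npos by (intro power_closed_cut_le) auto
  have tree: "real n ^ k * q ^ (k - 1) \<le> (real n / C) * (C + a) ^ k"
  proof -
    have "real n ^ k * q ^ (k - 1) = real n * (C + a) ^ (k - 1)"
      using k(1) npos unfolding q_def
      by (cases k) (auto simp: power_divide)
    also have "\<dots> \<le> (real n / C) * (C + a) ^ k"
      using k(1) C a npos by (cases k) (auto simp: field_simps)
    finally show ?thesis .
  qed
  have "real (n choose k) * real k ^ k * (q ^ (k - 1) * (1 - (C - a) / real n) ^ (k * (n - k)))
      \<le> real n ^ k * exp (real k) * (q ^ (k - 1) * y ^ k)"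
    using a n npos
    by (intro mult_mono[OF binomial_mult_power_self_le mult_left_mono[OF cut]]) (auto simp: q)
  also have "\<dots> = (real n ^ k * q ^ (k - 1)) * (exp (real k) * y ^ k)"
    by (simp add: algebra_simps)
  also have "\<dots> \<le> (real n / C) * (C + a) ^ k * (exp (real k) * y ^ k)"
    using tree by (intro mult_right_mono) (auto simp: y_def)
  also have "\<dots> = (real n / C) * (exp 1 * (C + a) * y) ^ k"
    by (simp add: power_mult_distrib exp_of_nat_mult[of k 1, symmetric])
  finally show ?thesis
    unfolding q_def y_def .
qed

lemma sum_power_le_geometric_tail:
  fixes x :: real
  assumes x: "0 \<le> x" "x < 1" and K: "finite K" "\<And>k. k \<in> K \<Longrightarrow> K0 \<le> k"
  shows "(\<Sum>k\<in>K. x ^ k) \<le> x ^ K0 / (1 - x)"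
proof -
  have inj: "inj_on (\<lambda>k. k - K0) K"
    using K(2) by (intro inj_onI) (metis le_add_diff_inverse)
  have "(\<Sum>k\<in>K. x ^ k) = x ^ K0 * (\<Sum>k\<in>K. x ^ (k - K0))"
    unfolding sum_distrib_left using K(2) by (intro sum.cong refl) (simp flip: power_add)
  also have "(\<Sum>k\<in>K. x ^ (k - K0)) = (\<Sum>j\<in>(\<lambda>k. k - K0) ` K. x ^ j)"
    by (simp add: sum.reindex[OF inj])
  also have "\<dots> \<le> (\<Sum>j. x ^ j)"
    by (rule sum_le_suminf) (use x K in auto)
  also have "(\<Sum>j. x ^ j) = 1 / (1 - x)"
    using x by (intro suminf_geometric) simp
  finally show ?thesis
    using x by (simp add: mult_left_mono divide_inverse)
qed

lemma ln_add_le: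
  fixes C a :: real
  assumes "0 < C" "0 \<le> a"
  shows "ln (C + a) \<le> ln C + a / C"
proof -
  have "ln (C + a) - ln C = ln ((C + a) / C)"
    using assms by (simp add: ln_div)
  also have "\<dots> \<le> (C + a) / C - 1"
    using assms by (intro ln_le_minus_one) simp
  also have "\<dots> = a / C"
    using assms by (simp add: field_simps)
  finally show ?thesis
    by simp
qed

text \<open>For \<open>a = 0\<close> the ratio of the geometric series is exactly \<open>exp (- (\<delta>(C) - C \<epsilon>))\<close>.\<close>
lemma ratio_le_exp_delta:
  fixes C a \<epsilon> :: real
  assumes C: "0 < C" and a: "0 \<le> a" and \<epsilon>: "0 \<le> \<epsilon>"
  shows "exp 1 * (C + a) * exp (- (C - a) * (1 - \<epsilon>)) \<le> exp (- (delta C - C * \<epsilon> - a * (1 + 1 / C)))"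
proof -
  have "exp 1 * (C + a) * exp (- (C - a) * (1 - \<epsilon>)) = exp (1 + ln (C + a) - (C - a) * (1 - \<epsilon>))"
    using C a by (simp add: exp_add exp_diff mult_minus_left exp_minus field_simps)
  also have "\<dots> \<le> exp (- (delta C - C * \<epsilon> - a * (1 + 1 / C)))"
    using ln_add_le[OF C a] mult_nonneg_nonneg[OF \<epsilon> a]
    by (simp add: delta_def algebra_simps)
  finally show ?thesis .
qed

lemma prob_component_size_geometric_le:
  fixes C a \<epsilon> x :: real
  assumes n: "C \<le> real n" and C: "0 < C" and a: "0 \<le> a" "a \<le> C" and \<epsilon>: "\<epsilon> < 1"
    and p: "\<And>e. e \<in> Kn_edges n \<Longrightarrow> 0 \<le> p e \<and> p e \<le> 1 \<and> (C - a) / real n \<le> p e \<and> p e \<le> (C + a) / real n"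
    and x: "exp 1 * (C + a) * exp (- (C - a) * (1 - \<epsilon>)) \<le> x" "x < 1"
    and K: "\<And>k. k \<in> K \<Longrightarrow> 1 \<le> k \<and> K0 \<le> k \<and> real k \<le> \<epsilon> * real n"
  shows "measure_pmf.prob (random_graph n p) {G. \<exists>i\<in>{1..n}. card (open_component n G i) \<in> K}
           \<le> real n / C * (x ^ K0 / (1 - x))"
proof -
  have npos: "0 < real n"
    using n C by linarith
  have "0 \<le> exp 1 * (C + a) * exp (- (C - a) * (1 - \<epsilon>))"
    using C a by simp
  with x(1) have x0: "0 \<le> x"
    by linarith
  have "measure_pmf.prob (random_graph n p) {G. \<exists>i\<in>{1..n}. card (open_component n G i) \<in> K}
      \<le> (\<Sum>k\<in>K \<inter> {..n}. real (n choose k) * real k ^ k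
            * (((C + a) / real n) ^ (k - 1) * (1 - (C - a) / real n) ^ (k * (n - k))))"
    using C a n by (intro prob_component_size_le p) auto
  also have "\<dots> \<le> (\<Sum>k\<in>K \<inter> {..n}. real n / C * x ^ k)"
  proof (rule sum_mono)
    fix k assume "k \<in> K \<inter> {..n}"
    then have k: "1 \<le> k" "real k \<le> \<epsilon> * real n"
      using K by auto
    have "real (n choose k) * real k ^ k * (((C + a) / real n) ^ (k - 1) * (1 - (C - a) / real n) ^ (k * (n - k)))
        \<le> real n / C * (exp 1 * (C + a) * exp (- (C - a) * (1 - \<epsilon>))) ^ k"
      using component_size_term_le[OF k \<epsilon> C a n] .
    also have "\<dots> \<le> real n / C * x ^ k"
      using x(1) C a npos by (intro mult_left_mono power_mono) auto
    finally show "real (n choose k) * real k ^ k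
        * (((C + a) / real n) ^ (k - 1) * (1 - (C - a) / real n) ^ (k * (n - k))) \<le> real n / C * x ^ k" .
  qed
  also have "\<dots> \<le> real n / C * (x ^ K0 / (1 - x))"
    unfolding sum_distrib_left[symmetric] using C npos K x x0
    by (intro mult_left_mono sum_power_le_geometric_tail) auto
  finally show ?thesis .
qed

lemma prob_component_size_between_le:
  fixes C a \<epsilon> M \<rho> :: real
  assumes n: "C \<le> real n" and C: "0 < C" and a: "0 \<le> a" "a \<le> C"
    and \<epsilon>: "\<epsilon> < 1" and M: "0 \<le> M" and \<rho>: "0 < \<rho>"
    and p: "\<And>e. e \<in> Kn_edges n \<Longrightarrow> 0 \<le> p e \<and> p e \<le> 1 \<and> (C - a) / real n \<le> p e \<and> p e \<le> (C + a) / real n"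
    and ratio: "exp 1 * (C + a) * exp (- (C - a) * (1 - \<epsilon>)) \<le> exp (- \<rho>)"
  shows "measure_pmf.prob (random_graph n p)
           {G. \<exists>i\<in>{1..n}. M * ln (real n) + 1 \<le> real (card (open_component n G i))
                          \<and> real (card (open_component n G i)) \<le> \<epsilon> * real n}
         \<le> real n powr (1 - \<rho> * M) / (C * (1 - exp (- \<rho>)))"
proof -
  define K0 where "K0 = nat \<lceil>M * ln (real n)\<rceil>"
  have npos: "0 < real n"
    using n C by linarith
  have "0 \<le> M * ln (real n)"
    using M npos by simp
  then have "measure_pmf.prob (random_graph n p)
           {G. \<exists>i\<in>{1..n}. card (open_component n G i) \<in> {k. M * ln (real n) + 1 \<le> real k \<and> real k \<le> \<epsilon> * real n}}
      \<le> real n / C * (exp (- \<rho>) ^ K0 / (1 - exp (- \<rho>)))"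
    using \<rho> unfolding K0_def
    by (intro prob_component_size_geometric_le[OF n C a \<epsilon> p ratio]) (auto simp: nat_le_iff ceiling_le_iff)
  also have "\<dots> \<le> real n / C * (real n powr (- (\<rho> * M)) / (1 - exp (- \<rho>)))"
  proof -
    have "exp (- \<rho>) ^ K0 = exp (- (\<rho> * real K0))"
      by (simp add: exp_of_nat_mult[symmetric] mult.commute)
    also have "\<dots> \<le> exp (- (\<rho> * M) * ln (real n))"
      using \<rho> real_nat_ceiling_ge[of "M * ln (real n)"] unfolding K0_def by simp
    also have "\<dots> = real n powr (- (\<rho> * M))"
      using npos by (simp add: powr_def)
    finally show ?thesis
      using \<rho> npos C by (intro mult_left_mono divide_right_mono) auto
  qed
  also have "\<dots> = real n powr (1 - \<rho> * M) / (C * (1 - exp (- \<rho>)))"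
    using npos by (simp add: powr_diff powr_minus divide_simps)
  finally show ?thesis
    by simp
qed

lemma eventually_mult_powr_le_powr:
  fixes A a b :: real
  assumes "a < b"
  shows "eventually (\<lambda>n. A * real n powr a \<le> real n powr b) sequentially"
proof -
  have "(\<lambda>n. A * real n powr (a - b)) \<longlonglongrightarrow> A * 0"
    using assms by (intro tendsto_mult tendsto_const tendsto_neg_powr filterlim_real_sequentially) auto
  then have "eventually (\<lambda>n. A * real n powr (a - b) < 1) sequentially"
    by (intro order_tendstoD(2)) auto
  then show ?thesis
  proof (rule eventually_mono)
    fix n :: nat assume "A * real n powr (a - b) < 1"
    then have "A * real n powr (a - b) * real n powr b \<le> 1 * real n powr b"
      by (intro mult_right_mono) auto
    then show "A * real n powr a \<le> real n powr b"
      by (simp add: mult.assoc powr_add[symmetric])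
  qed
qed

lemma eventually_sequentially_real_threshold:
  assumes "eventually P sequentially"
  shows "\<exists>N>0. \<forall>n. real n \<ge> N \<longrightarrow> P n"
proof -
  obtain N where "\<And>n. n \<ge> N \<Longrightarrow> P n"
    using assms unfolding eventually_sequentially by blast
  then show ?thesis
    by (intro exI[of _ "real N + 1"]) auto
qed

lemma eventually_prob_component_size_between_le:
  fixes C \<epsilon> M \<rho> :: real and \<alpha> :: "nat \<Rightarrow> real" and p :: "nat \<Rightarrow> nat set \<Rightarrow> real"
  assumes C: "0 < C" and \<alpha>: "\<And>n. 0 \<le> \<alpha> n" "\<alpha> \<longlonglongrightarrow> 0"
    and p_prob: "\<And>n e. e \<in> Kn_edges n \<Longrightarrow> 0 \<le> p n e \<and> p n e \<le> 1"
    and p_bounds: "\<And>n e. n \<ge> 1 \<Longrightarrow> e \<in> Kn_edges n \<Longrightarrow>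
        (C - \<alpha> n) / real n \<le> p n e \<and> p n e \<le> (C + \<alpha> n) / real n"
    and \<epsilon>: "0 \<le> \<epsilon>" "\<epsilon> < 1" and M: "0 \<le> M" and \<rho>: "0 < \<rho>" "\<rho> < delta C - C * \<epsilon>"
  shows "eventually (\<lambda>n. measure_pmf.prob (random_graph n (p n))
           {G. \<exists>i\<in>{1..n}. M * ln (real n) + 1 \<le> real (card (open_component n G i))
                          \<and> real (card (open_component n G i)) \<le> \<epsilon> * real n}
         \<le> real n powr (1 - \<rho> * M) / (C * (1 - exp (- \<rho>)))) sequentially"
proof -
  define \<eta> where "\<eta> = min C ((delta C - C * \<epsilon> - \<rho>) / (1 + 1 / C))"
  have "eventually (\<lambda>n. \<alpha> n < \<eta>) sequentially"
    using \<alpha>(2) C \<rho> unfolding \<eta>_def by (intro order_tendstoD(2)) (auto intro!: divide_pos_pos add_pos_pos)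
  moreover have "eventually (\<lambda>n. C \<le> real n) sequentially"
    using filterlim_real_sequentially unfolding filterlim_at_top by blast
  ultimately show ?thesis
  proof eventually_elim
    case (elim n)
    have a: "0 \<le> \<alpha> n" "\<alpha> n \<le> C" "\<alpha> n * (1 + 1 / C) \<le> delta C - C * \<epsilon> - \<rho>"
      using elim(1) \<alpha>(1)[of n] C unfolding \<eta>_def by (auto simp: field_simps)
    then have "exp 1 * (C + \<alpha> n) * exp (- (C - \<alpha> n) * (1 - \<epsilon>)) \<le> exp (- \<rho>)"
      using ratio_le_exp_delta[OF C a(1) \<epsilon>(1)] by (auto elim!: order_trans)
    moreover have "1 \<le> n"
      using elim(2) C by simp
    ultimately show ?case
      using elim(2) C a \<epsilon>(2) M \<rho>(1) p_prob p_bounds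
      by (intro prob_component_size_between_le) auto
  qed
qed

theorem lemma3:
  fixes C \<epsilon> \<omega> M \<theta> :: real
    and \<alpha> :: "nat \<Rightarrow> real"
    and p :: "nat \<Rightarrow> nat set \<Rightarrow> real"
  assumes C_pos: "C > 0" and C_ne: "C \<noteq> 1"
    and \<alpha>_nonneg: "\<And>n. \<alpha> n \<ge> 0" and \<alpha>_lim: "\<alpha> \<longlonglongrightarrow> 0"
    and p_prob: "\<And>n e. e \<in> Kn_edges n \<Longrightarrow> 0 \<le> p n e \<and> p n e \<le> 1"
    and p_bounds: "\<And>n e. n \<ge> 1 \<Longrightarrow> e \<in> Kn_edges n \<Longrightarrow>
        (C - \<alpha> n) / real n \<le> p n e \<and> p n e \<le> (C + \<alpha> n) / real n"
    and \<epsilon>: "0 < \<epsilon>" "\<epsilon> < 1" and \<omega>: "\<omega> > 0"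
    and \<delta>0: "delta C - C * \<epsilon> - \<omega> > 0"
    and M: "M > 1 / (delta C - C * \<epsilon> - \<omega>)"
    and \<theta>: "\<theta> < M * (delta C - C * \<epsilon> - \<omega>) - 1"
  shows "\<exists>N>0. \<forall>n::nat. real n \<ge> N \<longrightarrow>
     measure_pmf.prob (random_graph n (p n))
       {G. \<exists>i\<in>{1..n}. M * ln (real n) + 1 \<le> real (card (open_component n G i))
                      \<and> real (card (open_component n G i)) \<le> \<epsilon> * real n}
     \<le> 1 / real n powr \<theta>"
proof -
  define \<rho> where "\<rho> = delta C - C * \<epsilon> - \<omega> / 2"
  have M_pos: "0 < M"
    using M \<delta>0 less_trans[of 0 "1 / (delta C - C * \<epsilon> - \<omega>)" M] by simp
  have "\<rho> * M = M * (delta C - C * \<epsilon> - \<omega>) + M * \<omega> / 2"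
    unfolding \<rho>_def by (simp add: algebra_simps)
  then have \<rho>: "0 < \<rho>" "\<rho> < delta C - C * \<epsilon>" "1 - \<rho> * M < - \<theta>"
    using \<delta>0 \<theta> \<omega> mult_pos_pos[OF M_pos \<omega>] by (auto simp: \<rho>_def)
  have "eventually (\<lambda>n. measure_pmf.prob (random_graph n (p n))
           {G. \<exists>i\<in>{1..n}. M * ln (real n) + 1 \<le> real (card (open_component n G i))
                          \<and> real (card (open_component n G i)) \<le> \<epsilon> * real n}
         \<le> real n powr (1 - \<rho> * M) / (C * (1 - exp (- \<rho>)))) sequentially"
    (is "eventually (\<lambda>n. ?prob n \<le> _) _")
    using C_pos \<alpha>_nonneg \<alpha>_lim p_prob p_bounds \<epsilon> M_pos \<rho>(1,2)
    by (intro eventually_prob_component_size_between_le) auto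
  moreover have "eventually (\<lambda>n. 1 / (C * (1 - exp (- \<rho>))) * real n powr (1 - \<rho> * M)
      \<le> real n powr (- \<theta>)) sequentially"
    using \<rho>(3) by (rule eventually_mult_powr_le_powr)
  ultimately have "eventually (\<lambda>n. ?prob n \<le> 1 / real n powr \<theta>) sequentially"
    by eventually_elim (simp add: powr_minus_divide)
  then show ?thesis
    by (rule eventually_sequentially_real_threshold)
qed

end
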